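(* A ring $R$ is almost Armendariz if and only if the Laurent polynomial ring $R[x,x^{-1}]$ is almost Armendariz.
   Context: All rings are associative with identity. For a ring $R$, $P(R)$ denotes the prime radical of $R$ (the intersection of all prime ideals of $R$, equivalently the set of strongly nilpotent elements of $R$). A ring $R$ is called almost Armendariz if whenever $f(x)=\sum_{i=0}^m a_ix^i$ and $g(x)=\sum_{j=0}^n b_jx^j\in R[x]$ satisfy $f(x)g(x)=0$, then $a_ib_j\in P(R)$ for all $0\le i\le m$, $0\le j\le n$. *)

theory Defs
  imports "HOL-Algebra.Algebra"
begin

definition nc_prime_ideal :: "'a set \<Rightarrow> ('a, 'm) ring_scheme \<Rightarrow> bool" where
  "nc_prime_ideal P R \<longleftrightarrow> ideal P R \<and> P \<noteq> carrier R \<and>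
     (\<forall>a\<in>carrier R. \<forall>b\<in>carrier R.
        (\<forall>r\<in>carrier R. a \<otimes>\<^bsub>R\<^esub> r \<otimes>\<^bsub>R\<^esub> b \<in> P) \<longrightarrow> a \<in> P \<or> b \<in> P)"

definition prime_radical :: "('a, 'm) ring_scheme \<Rightarrow> 'a set" where
  "prime_radical R = carrier R \<inter> \<Inter> {P. nc_prime_ideal P R}"

definition almost_armendariz :: "('a, 'm) ring_scheme \<Rightarrow> bool" where
  "almost_armendariz R \<longleftrightarrow>
     (\<forall>f\<in>carrier (UP R). \<forall>g\<in>carrier (UP R).
        f \<otimes>\<^bsub>UP R\<^esub> g = \<zero>\<^bsub>UP R\<^esub> \<longrightarrow>
        (\<forall>i j. f i \<otimes>\<^bsub>R\<^esub> g j \<in> prime_radical R))"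

definition laurent_carrier :: "('a, 'm) ring_scheme \<Rightarrow> (int \<Rightarrow> 'a) set" where
  "laurent_carrier R = {f. (\<forall>n. f n \<in> carrier R) \<and> finite {n. f n \<noteq> \<zero>\<^bsub>R\<^esub>}}"

definition Laurent :: "('a, 'm) ring_scheme \<Rightarrow> (int \<Rightarrow> 'a) ring" where
  "Laurent R = (\<lparr>
     carrier = laurent_carrier R,
     monoid.mult = (\<lambda>f g. \<lambda>n. \<Oplus>\<^bsub>R\<^esub>i \<in> {i. f i \<noteq> \<zero>\<^bsub>R\<^esub>}. f i \<otimes>\<^bsub>R\<^esub> g (n - i)),
     one = (\<lambda>n. if n = 0 then \<one>\<^bsub>R\<^esub> else \<zero>\<^bsub>R\<^esub>),
     ring.zero = (\<lambda>n. \<zero>\<^bsub>R\<^esub>),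
     ring.add = (\<lambda>f g. \<lambda>n. f n \<oplus>\<^bsub>R\<^esub> g n) \<rparr> :: (int \<Rightarrow> 'a) ring)"

end

theory Submission
  imports Defs
begin

text \<open>
  The key fact is that the prime radical of \<open>R[x,x\<inverse>]\<close> consists of the Laurent
  polynomials all of whose coefficients lie in \<open>P(R)\<close>: a prime ideal \<open>P\<close> of \<open>R\<close> extends to the
  prime ideal \<open>P[x,x\<inverse>]\<close> (compare the highest coefficients outside \<open>P\<close>), and every prime
  ideal of \<open>R[x,x\<inverse>]\<close> contracts to a prime ideal of \<open>R\<close>. Taking constant coefficients then
  carries the almost Armendariz property from \<open>R[x,x\<inverse>]\<close> down to \<open>R\<close>.

  Conversely, let \<open>F(y) G(y) = 0\<close> in \<open>R[x,x\<inverse>][y]\<close> with all \<open>x\<close>-exponents of \<open>F\<close> and \<open>G\<close>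
  in \<open>(-N, N)\<close>. The Kronecker substitution \<open>y := x\<^sup>k\<close> with \<open>k \<ge> 4N\<close>, applied to \<open>x\<^sup>N F\<close> and
  \<open>x\<^sup>N G\<close>, gives two polynomials in \<open>R[x]\<close> with zero product whose coefficients are exactly the
  coefficients of \<open>F\<close> and \<open>G\<close>. So every product of a coefficient of \<open>F\<close> with one of \<open>G\<close> lies
  in \<open>P(R)\<close>, hence so does every coefficient of each product \<open>F\<^sub>i G\<^sub>j\<close>.
\<close>

lemma (in comm_monoid) finprod_finprod_swap:
  assumes "finite A" "finite B" "\<And>a b. a \<in> A \<Longrightarrow> b \<in> B \<Longrightarrow> f a b \<in> carrier G"
  shows "(\<Otimes>a\<in>A. \<Otimes>b\<in>B. f a b) = (\<Otimes>b\<in>B. \<Otimes>a\<in>A. f a b)"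
  using assms(1,3)
proof (induction A rule: finite_induct)
  case (insert x A)
  have "(\<Otimes>a\<in>insert x A. \<Otimes>b\<in>B. f a b) = (\<Otimes>b\<in>B. f x b) \<otimes> (\<Otimes>b\<in>B. \<Otimes>a\<in>A. f a b)"
    using insert assms(2) by (simp add: Pi_def)
  also have "\<dots> = (\<Otimes>b\<in>B. f x b \<otimes> (\<Otimes>a\<in>A. f a b))"
    using insert assms(2) by (simp add: Pi_def)
  also have "\<dots> = (\<Otimes>b\<in>B. \<Otimes>a\<in>insert x A. f a b)"
    using insert assms(2) by (intro finprod_cong) (auto simp: Pi_def)
  finally show ?case .
qed simp

lemma (in comm_monoid) finprod_lessThan_mult:
  fixes k M :: nat
  assumes f: "\<And>u. f u \<in> carrier G"
  shows "(\<Otimes>u\<in>{..<k * M}. f u) = (\<Otimes>i\<in>{..<M}. \<Otimes>w\<in>{..<k}. f (k * i + w))"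
proof (induction M)
  case (Suc M)
  have blocks: "{..<k * Suc M} = {..<k * M} \<union> (\<lambda>w. k * M + w) ` {..<k}"
  proof (intro equalityI subsetI)
    fix u
    assume "u \<in> {..<k * Suc M}"
    then show "u \<in> {..<k * M} \<union> (\<lambda>w. k * M + w) ` {..<k}"
      by (cases "u < k * M") (auto intro!: image_eqI[of _ _ "u - k * M"])
  qed auto
  have "(\<Otimes>u\<in>{..<k * Suc M}. f u)
      = (\<Otimes>u\<in>{..<k * M}. f u) \<otimes> (\<Otimes>u\<in>(\<lambda>w. k * M + w) ` {..<k}. f u)"
    unfolding blocks using f by (intro finprod_Un_disjoint) auto
  also have "(\<Otimes>u\<in>(\<lambda>w. k * M + w) ` {..<k}. f u) = (\<Otimes>w\<in>{..<k}. f (k * M + w))"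
    using f by (subst finprod_reindex) (auto simp: inj_on_def)
  also have "(\<Otimes>u\<in>{..<k * M}. f u) \<otimes> (\<Otimes>w\<in>{..<k}. f (k * M + w))
      = (\<Otimes>i\<in>{..<Suc M}. \<Otimes>w\<in>{..<k}. f (k * i + w))"
    unfolding Suc lessThan_Suc using f by (subst finprod_insert) (auto simp: m_comm)
  finally show ?case .
qed simp

lemma ideal_finsum_closed:
  assumes "ideal I R" "finite A" "\<And>a. a \<in> A \<Longrightarrow> f a \<in> I"
  shows "finsum R f A \<in> I"
proof -
  interpret ideal I R by (fact assms(1))
  show ?thesis
    using assms(2,3)
  proof (induction A rule: finite_induct)
    case empty
    show ?case
      by (simp add: additive_subgroup.zero_closed[OF is_additive_subgroup])
  next
    case (insert a A)
    then have "f \<in> insert a A \<rightarrow> carrier R"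
      using a_subset by blast
    then show ?case
      using insert by (simp add: finsum_insert)
  qed
qed

lemma UP_mult_apply:
  "p \<in> carrier (UP R) \<Longrightarrow> q \<in> carrier (UP R) \<Longrightarrow>
    (p \<otimes>\<^bsub>UP R\<^esub> q) n = (\<Oplus>\<^bsub>R\<^esub>i\<in>{..n}. p i \<otimes>\<^bsub>R\<^esub> q (n - i))"
  by (simp add: UP_def)

lemma UP_zero_apply: "\<zero>\<^bsub>UP R\<^esub> n = \<zero>\<^bsub>R\<^esub>"
  by (simp add: UP_def)

context ring_hom_ring
begin

lemma UP_map_closed:
  assumes p: "p \<in> carrier (UP R)"
  shows "h \<circ> p \<in> carrier (UP S)"
proof -
  obtain m where "bound \<zero>\<^bsub>R\<^esub> m p"
    using p by (auto simp: UP_def up_def)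
  then have "bound \<zero>\<^bsub>S\<^esub> m (h \<circ> p)"
    by (auto simp: bound_def)
  then show ?thesis
    using p by (auto simp: UP_def up_def Pi_def intro: hom_closed)
qed

lemma UP_map_mult:
  assumes p: "p \<in> carrier (UP R)" and q: "q \<in> carrier (UP R)"
  shows "(h \<circ> p) \<otimes>\<^bsub>UP S\<^esub> (h \<circ> q) = h \<circ> (p \<otimes>\<^bsub>UP R\<^esub> q)"
proof
  fix n
  have "p i \<in> carrier R" "q i \<in> carrier R" for i
    using p q by (auto simp: UP_def up_def)
  then show "((h \<circ> p) \<otimes>\<^bsub>UP S\<^esub> (h \<circ> q)) n = (h \<circ> (p \<otimes>\<^bsub>UP R\<^esub> q)) n"
    unfolding UP_mult_apply[OF UP_map_closed[OF p] UP_map_closed[OF q]] UP_mult_apply[OF p q]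
    by (simp add: Pi_def comp_def)
qed

end

section \<open>The ring of Laurent polynomials\<close>

lemma Laurent_simps:
  "carrier (Laurent R) = laurent_carrier R"
  "\<zero>\<^bsub>Laurent R\<^esub> = (\<lambda>n. \<zero>\<^bsub>R\<^esub>)"
  "\<one>\<^bsub>Laurent R\<^esub> = (\<lambda>n. if n = 0 then \<one>\<^bsub>R\<^esub> else \<zero>\<^bsub>R\<^esub>)"
  "f \<oplus>\<^bsub>Laurent R\<^esub> g = (\<lambda>n. f n \<oplus>\<^bsub>R\<^esub> g n)"
  "f \<otimes>\<^bsub>Laurent R\<^esub> g = (\<lambda>n. \<Oplus>\<^bsub>R\<^esub>i \<in> {i. f i \<noteq> \<zero>\<^bsub>R\<^esub>}. f i \<otimes>\<^bsub>R\<^esub> g (n - i))"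
  by (simp_all add: Laurent_def)

definition laurent_monom :: "('a, 'm) ring_scheme \<Rightarrow> 'a \<Rightarrow> int \<Rightarrow> int \<Rightarrow> 'a" where
  "laurent_monom R r k = (\<lambda>n. if n = k then r else \<zero>\<^bsub>R\<^esub>)"

lemma Laurent_one: "\<one>\<^bsub>Laurent R\<^esub> = laurent_monom R \<one>\<^bsub>R\<^esub> 0"
  by (simp add: Laurent_simps laurent_monom_def)

context ring
begin

lemma laurent_carrier_iff:
  "f \<in> laurent_carrier R \<longleftrightarrow> (\<forall>n. f n \<in> carrier R) \<and> finite {n. f n \<noteq> \<zero>}"
  by (simp add: laurent_carrier_def)

lemma laurent_carrier_coeff: "f \<in> laurent_carrier R \<Longrightarrow> f n \<in> carrier R"
  by (simp add: laurent_carrier_iff)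

lemma laurent_carrier_finite_support: "f \<in> laurent_carrier R \<Longrightarrow> finite {n. f n \<noteq> \<zero>}"
  by (simp add: laurent_carrier_iff)

lemma Laurent_mult_apply:
  assumes "\<And>n. f n \<in> carrier R" "\<And>n. g n \<in> carrier R" "finite A" "{i. f i \<noteq> \<zero>} \<subseteq> A"
  shows "(f \<otimes>\<^bsub>Laurent R\<^esub> g) n = (\<Oplus>i\<in>A. f i \<otimes> g (n - i))"
  unfolding Laurent_simps
  by (rule add.finprod_mono_neutral_cong) (use assms finite_subset in auto)

lemma Laurent_mult_apply_right:
  assumes "\<And>n. f n \<in> carrier R" "\<And>n. g n \<in> carrier R" "finite {i. f i \<noteq> \<zero>}"
    "finite B" "{j. g j \<noteq> \<zero>} \<subseteq> B"
  shows "(f \<otimes>\<^bsub>Laurent R\<^esub> g) n = (\<Oplus>j\<in>B. f (n - j) \<otimes> g j)"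
proof -
  have "f i \<otimes> g (n - i) = \<zero>" if "i \<notin> (\<lambda>j. n - j) ` B" for i
  proof -
    have "n - i \<notin> B"
    proof
      assume "n - i \<in> B"
      then have "n - (n - i) \<in> (\<lambda>j. n - j) ` B"
        by (rule imageI)
      then show False
        using that by simp
    qed
    then have "g (n - i) = \<zero>"
      using assms(5) by blast
    then show ?thesis
      by (simp add: assms(1))
  qed
  then have "(f \<otimes>\<^bsub>Laurent R\<^esub> g) n = (\<Oplus>i\<in>(\<lambda>j. n - j) ` B. f i \<otimes> g (n - i))"
    unfolding Laurent_simps
    by (intro add.finprod_mono_neutral_cong) (use assms in auto)
  also have "\<dots> = (\<Oplus>j\<in>B. f (n - j) \<otimes> g j)"
    by (subst finsum_reindex) (auto simp: inj_on_def assms)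
  finally show ?thesis .
qed

lemma Laurent_mult_closed:
  assumes f: "f \<in> laurent_carrier R" and g: "g \<in> laurent_carrier R"
  shows "f \<otimes>\<^bsub>Laurent R\<^esub> g \<in> laurent_carrier R"
proof -
  let ?S = "{i. f i \<noteq> \<zero>}" and ?T = "{j. g j \<noteq> \<zero>}"
  have "(f \<otimes>\<^bsub>Laurent R\<^esub> g) n = \<zero>" if "n \<notin> (\<lambda>(i, j). i + j) ` (?S \<times> ?T)" for n
  proof -
    have "f i \<otimes> g (n - i) = \<zero>" for i
    proof (cases "f i = \<zero> \<or> g (n - i) = \<zero>")
      case False
      then have "(i, n - i) \<in> ?S \<times> ?T"
        by simp
      then have "n \<in> (\<lambda>(i, j). i + j) ` (?S \<times> ?T)"
        by (rule image_eqI[rotated]) simp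
      then show ?thesis
        using that by blast
    qed (use f g laurent_carrier_coeff in auto)
    then show ?thesis
      by (simp add: Laurent_simps)
  qed
  then have "{n. (f \<otimes>\<^bsub>Laurent R\<^esub> g) n \<noteq> \<zero>} \<subseteq> (\<lambda>(i, j). i + j) ` (?S \<times> ?T)"
    by blast
  moreover have "finite ((\<lambda>(i, j). i + j) ` (?S \<times> ?T))"
    using f g by (simp add: laurent_carrier_finite_support)
  moreover have "(f \<otimes>\<^bsub>Laurent R\<^esub> g) n \<in> carrier R" for n
    using f g by (simp add: Laurent_simps laurent_carrier_coeff Pi_def)
  ultimately show ?thesis
    by (auto simp: laurent_carrier_iff intro: finite_subset)
qed

lemma Laurent_mult_assoc:
  assumes f: "f \<in> laurent_carrier R" and g: "g \<in> laurent_carrier R" and h: "h \<in> laurent_carrier R"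
  shows "(f \<otimes>\<^bsub>Laurent R\<^esub> g) \<otimes>\<^bsub>Laurent R\<^esub> h = f \<otimes>\<^bsub>Laurent R\<^esub> (g \<otimes>\<^bsub>Laurent R\<^esub> h)"
proof
  fix n
  let ?A = "{i. f i \<noteq> \<zero>}" and ?B = "{i. g i \<noteq> \<zero>}" and ?C = "{i. h i \<noteq> \<zero>}"
  have fin: "finite ?A" "finite ?B" "finite ?C"
    using f g h laurent_carrier_finite_support by auto
  have fv: "\<And>n. f n \<in> carrier R" "\<And>n. g n \<in> carrier R" "\<And>n. h n \<in> carrier R"
    using f g h laurent_carrier_coeff by auto
  have fg: "f \<otimes>\<^bsub>Laurent R\<^esub> g \<in> laurent_carrier R" and gh: "g \<otimes>\<^bsub>Laurent R\<^esub> h \<in> laurent_carrier R"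
    using Laurent_mult_closed f g h by auto
  have "((f \<otimes>\<^bsub>Laurent R\<^esub> g) \<otimes>\<^bsub>Laurent R\<^esub> h) n
      = (\<Oplus>c\<in>?C. (f \<otimes>\<^bsub>Laurent R\<^esub> g) (n - c) \<otimes> h c)"
    using fg fv fin by (intro Laurent_mult_apply_right) (auto simp: laurent_carrier_iff)
  also have "\<dots> = (\<Oplus>c\<in>?C. \<Oplus>a\<in>?A. f a \<otimes> g (n - c - a) \<otimes> h c)"
    by (intro finsum_cong) (auto simp: Laurent_mult_apply[OF fv(1,2) fin(1)] finsum_ldistr fin fv)
  also have "\<dots> = (\<Oplus>a\<in>?A. \<Oplus>c\<in>?C. f a \<otimes> g (n - c - a) \<otimes> h c)"
    by (rule add.finprod_finprod_swap[symmetric]) (use fin fv in auto)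
  also have "\<dots> = (\<Oplus>a\<in>?A. f a \<otimes> (\<Oplus>c\<in>?C. g (n - a - c) \<otimes> h c))"
    by (intro finsum_cong) (auto simp: finsum_rdistr fin fv m_assoc algebra_simps)
  also have "\<dots> = (\<Oplus>a\<in>?A. f a \<otimes> (g \<otimes>\<^bsub>Laurent R\<^esub> h) (n - a))"
    by (intro finsum_cong) (auto simp: Laurent_mult_apply_right[OF fv(2,3) fin(2) fin(3)] fv gh laurent_carrier_coeff)
  also have "\<dots> = (f \<otimes>\<^bsub>Laurent R\<^esub> (g \<otimes>\<^bsub>Laurent R\<^esub> h)) n"
    by (rule Laurent_mult_apply[symmetric]) (use fv gh laurent_carrier_coeff fin in auto)
  finally show "((f \<otimes>\<^bsub>Laurent R\<^esub> g) \<otimes>\<^bsub>Laurent R\<^esub> h) n = (f \<otimes>\<^bsub>Laurent R\<^esub> (g \<otimes>\<^bsub>Laurent R\<^esub> h)) n" .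
qed

lemma Laurent_l_distr:
  assumes f: "f \<in> laurent_carrier R" and g: "g \<in> laurent_carrier R" and h: "\<And>n. h n \<in> carrier R"
  shows "(f \<oplus>\<^bsub>Laurent R\<^esub> g) \<otimes>\<^bsub>Laurent R\<^esub> h
      = f \<otimes>\<^bsub>Laurent R\<^esub> h \<oplus>\<^bsub>Laurent R\<^esub> g \<otimes>\<^bsub>Laurent R\<^esub> h"
proof
  fix n
  let ?U = "{i. f i \<noteq> \<zero>} \<union> {i. g i \<noteq> \<zero>}"
  have fin: "finite ?U" and fv: "\<And>n. f n \<in> carrier R" "\<And>n. g n \<in> carrier R"
    using f g by (auto simp: laurent_carrier_iff)
  have "((f \<oplus>\<^bsub>Laurent R\<^esub> g) \<otimes>\<^bsub>Laurent R\<^esub> h) n = (\<Oplus>i\<in>?U. (f i \<oplus> g i) \<otimes> h (n - i))"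
    unfolding Laurent_simps(4) by (rule Laurent_mult_apply) (use fv h fin in auto)
  also have "\<dots> = (\<Oplus>i\<in>?U. f i \<otimes> h (n - i)) \<oplus> (\<Oplus>i\<in>?U. g i \<otimes> h (n - i))"
    by (simp add: fv h l_distr finsum_addf Pi_def)
  also have "\<dots> = (f \<otimes>\<^bsub>Laurent R\<^esub> h \<oplus>\<^bsub>Laurent R\<^esub> g \<otimes>\<^bsub>Laurent R\<^esub> h) n"
    unfolding Laurent_simps(4) by (subst (1 2) Laurent_mult_apply[where A = ?U]) (use fv h fin in auto)
  finally show "((f \<oplus>\<^bsub>Laurent R\<^esub> g) \<otimes>\<^bsub>Laurent R\<^esub> h) n
      = (f \<otimes>\<^bsub>Laurent R\<^esub> h \<oplus>\<^bsub>Laurent R\<^esub> g \<otimes>\<^bsub>Laurent R\<^esub> h) n" .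
qed

lemma Laurent_r_distr:
  assumes f: "f \<in> laurent_carrier R" and g: "g \<in> laurent_carrier R" and h: "h \<in> laurent_carrier R"
  shows "h \<otimes>\<^bsub>Laurent R\<^esub> (f \<oplus>\<^bsub>Laurent R\<^esub> g)
      = h \<otimes>\<^bsub>Laurent R\<^esub> f \<oplus>\<^bsub>Laurent R\<^esub> h \<otimes>\<^bsub>Laurent R\<^esub> g"
proof
  fix n
  let ?U = "{i. f i \<noteq> \<zero>} \<union> {i. g i \<noteq> \<zero>}"
  have fin: "finite ?U" "finite {i. h i \<noteq> \<zero>}"
    and fv: "\<And>n. f n \<in> carrier R" "\<And>n. g n \<in> carrier R" "\<And>n. h n \<in> carrier R"
    using f g h by (auto simp: laurent_carrier_iff)
  have "(h \<otimes>\<^bsub>Laurent R\<^esub> (f \<oplus>\<^bsub>Laurent R\<^esub> g)) n = (\<Oplus>i\<in>?U. h (n - i) \<otimes> (f i \<oplus> g i))"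
    unfolding Laurent_simps(4) by (rule Laurent_mult_apply_right) (use fv fin in auto)
  also have "\<dots> = (\<Oplus>i\<in>?U. h (n - i) \<otimes> f i) \<oplus> (\<Oplus>i\<in>?U. h (n - i) \<otimes> g i)"
    by (simp add: fv r_distr finsum_addf Pi_def)
  also have "\<dots> = (h \<otimes>\<^bsub>Laurent R\<^esub> f \<oplus>\<^bsub>Laurent R\<^esub> h \<otimes>\<^bsub>Laurent R\<^esub> g) n"
    unfolding Laurent_simps(4)
    by (subst (1 2) Laurent_mult_apply_right[where B = ?U]) (use fv fin in auto)
  finally show "(h \<otimes>\<^bsub>Laurent R\<^esub> (f \<oplus>\<^bsub>Laurent R\<^esub> g)) n
      = (h \<otimes>\<^bsub>Laurent R\<^esub> f \<oplus>\<^bsub>Laurent R\<^esub> h \<otimes>\<^bsub>Laurent R\<^esub> g) n" .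
qed

lemma laurent_monom_closed: "r \<in> carrier R \<Longrightarrow> laurent_monom R r k \<in> laurent_carrier R"
proof -
  assume r: "r \<in> carrier R"
  have "{n. laurent_monom R r k n \<noteq> \<zero>} \<subseteq> {k}"
    by (auto simp: laurent_monom_def)
  then show ?thesis
    using r by (auto simp: laurent_carrier_iff laurent_monom_def intro: finite_subset)
qed

lemma laurent_monom_mult_left:
  assumes r: "r \<in> carrier R" and h: "\<And>n. h n \<in> carrier R"
  shows "laurent_monom R r k \<otimes>\<^bsub>Laurent R\<^esub> h = (\<lambda>n. r \<otimes> h (n - k))"
proof
  fix n
  have "(laurent_monom R r k \<otimes>\<^bsub>Laurent R\<^esub> h) n = (\<Oplus>i\<in>{k}. laurent_monom R r k i \<otimes> h (n - i))"
    by (rule Laurent_mult_apply) (use r h in \<open>auto simp: laurent_monom_def\<close>)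
  then show "(laurent_monom R r k \<otimes>\<^bsub>Laurent R\<^esub> h) n = r \<otimes> h (n - k)"
    using r h by (simp add: laurent_monom_def)
qed

lemma laurent_monom_mult_right:
  assumes r: "r \<in> carrier R" and h: "h \<in> laurent_carrier R"
  shows "h \<otimes>\<^bsub>Laurent R\<^esub> laurent_monom R r k = (\<lambda>n. h (n - k) \<otimes> r)"
proof
  fix n
  have "(h \<otimes>\<^bsub>Laurent R\<^esub> laurent_monom R r k) n = (\<Oplus>j\<in>{k}. h (n - j) \<otimes> laurent_monom R r k j)"
    by (rule Laurent_mult_apply_right)
      (use r h in \<open>auto simp: laurent_monom_def laurent_carrier_iff\<close>)
  then show "(h \<otimes>\<^bsub>Laurent R\<^esub> laurent_monom R r k) n = h (n - k) \<otimes> r"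
    using r h by (simp add: laurent_monom_def laurent_carrier_coeff)
qed

theorem ring_Laurent: "ring (Laurent R)"
proof (rule ringI)
  show "abelian_group (Laurent R)"
  proof (rule abelian_groupI, unfold Laurent_simps(1,2,4))
    fix x y
    assume "x \<in> laurent_carrier R" "y \<in> laurent_carrier R"
    moreover have "{n. x n \<oplus> y n \<noteq> \<zero>} \<subseteq> {n. x n \<noteq> \<zero>} \<union> {n. y n \<noteq> \<zero>}"
      by auto
    ultimately show "(\<lambda>n. x n \<oplus> y n) \<in> laurent_carrier R"
      unfolding laurent_carrier_iff by (auto intro: finite_subset)
  next
    fix x
    assume x: "x \<in> laurent_carrier R"
    show "\<exists>y\<in>laurent_carrier R. (\<lambda>n. y n \<oplus> x n) = (\<lambda>n. \<zero>)"
    proof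
      show "(\<lambda>n. \<ominus> x n \<oplus> x n) = (\<lambda>n. \<zero>)"
        using x by (simp add: laurent_carrier_coeff l_neg)
      have "{n. \<ominus> x n \<noteq> \<zero>} \<subseteq> {n. x n \<noteq> \<zero>}"
        using x laurent_carrier_coeff by auto
      then show "(\<lambda>n. \<ominus> x n) \<in> laurent_carrier R"
        using x unfolding laurent_carrier_iff by (auto intro: finite_subset)
    qed
  qed (auto simp: laurent_carrier_iff a_ac)
next
  show "monoid (Laurent R)"
  proof (rule monoidI, unfold Laurent_simps(1))
    show "\<one>\<^bsub>Laurent R\<^esub> \<in> laurent_carrier R"
      by (simp add: Laurent_one laurent_monom_closed)
  next
    fix x
    assume "x \<in> laurent_carrier R"
    then show "\<one>\<^bsub>Laurent R\<^esub> \<otimes>\<^bsub>Laurent R\<^esub> x = x" "x \<otimes>\<^bsub>Laurent R\<^esub> \<one>\<^bsub>Laurent R\<^esub> = x"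
      by (simp_all add: Laurent_one laurent_monom_mult_left laurent_monom_mult_right laurent_carrier_coeff)
  qed (simp_all add: Laurent_mult_closed Laurent_mult_assoc)
qed (simp_all add: Laurent_simps(1) Laurent_l_distr Laurent_r_distr laurent_carrier_coeff)

lemma Laurent_finsum_apply:
  assumes "finite A" "f \<in> A \<rightarrow> laurent_carrier R"
  shows "(finsum (Laurent R) f A) n = (\<Oplus>i\<in>A. f i n)"
  using assms
proof (induction A rule: finite_induct)
  case empty
  interpret L: ring "Laurent R" by (rule ring_Laurent)
  show ?case
    by (simp add: Laurent_simps)
next
  case (insert a A)
  interpret L: ring "Laurent R" by (rule ring_Laurent)
  have "finsum (Laurent R) f (insert a A) = f a \<oplus>\<^bsub>Laurent R\<^esub> finsum (Laurent R) f A"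
    using insert by (intro L.finsum_insert) (auto simp: Laurent_simps)
  then show ?case
    using insert laurent_carrier_coeff by (auto simp: Laurent_simps Pi_def)
qed

lemma laurent_monom_expansion:
  assumes h: "h \<in> laurent_carrier R"
  shows "h = finsum (Laurent R) (\<lambda>k. laurent_monom R (h k) k) {k. h k \<noteq> \<zero>}"
proof
  fix n
  let ?S = "{k. h k \<noteq> \<zero>}"
  have fin: "finite ?S" and hv: "\<And>k. h k \<in> carrier R"
    using h by (auto simp: laurent_carrier_iff)
  have "(finsum (Laurent R) (\<lambda>k. laurent_monom R (h k) k) ?S) n = (\<Oplus>k\<in>?S. if n = k then h k else \<zero>)"
    using fin hv laurent_monom_closed
    by (subst Laurent_finsum_apply) (auto simp: laurent_monom_def)
  also have "\<dots> = (\<Oplus>k\<in>insert n ?S. if n = k then h k else \<zero>)"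
    using fin hv by (intro add.finprod_mono_neutral_cong) auto
  also have "\<dots> = h n"
    using fin hv by (simp add: add.finprod_singleton)
  finally show "h n = (finsum (Laurent R) (\<lambda>k. laurent_monom R (h k) k) ?S) n" ..
qed

lemma laurent_monom_eq_mult:
  "r \<in> carrier R \<Longrightarrow> laurent_monom R r k = laurent_monom R r 0 \<otimes>\<^bsub>Laurent R\<^esub> laurent_monom R \<one> k"
  by (subst laurent_monom_mult_left) (auto simp: laurent_monom_def)

lemma ring_hom_ring_laurent_const: "ring_hom_ring R (Laurent R) (\<lambda>r. laurent_monom R r 0)"
proof (rule ring_hom_ringI2)
  show "ring R" "ring (Laurent R)"
    by (fact ring_axioms ring_Laurent)+
  show "(\<lambda>r. laurent_monom R r 0) \<in> ring_hom R (Laurent R)"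
  proof (rule ring_hom_memI)
    fix x y
    assume "x \<in> carrier R" "y \<in> carrier R"
    then show "laurent_monom R (x \<otimes> y) 0 = laurent_monom R x 0 \<otimes>\<^bsub>Laurent R\<^esub> laurent_monom R y 0"
      by (subst laurent_monom_mult_left) (auto simp: laurent_monom_def)
  qed (auto simp: laurent_monom_def Laurent_simps laurent_monom_closed[unfolded laurent_monom_def])
qed

lemma Laurent_mem_idealI:
  assumes Q: "ideal Q (Laurent R)" and h: "h \<in> laurent_carrier R"
    and coeff: "\<And>n. laurent_monom R (h n) 0 \<in> Q"
  shows "h \<in> Q"
proof -
  interpret Q: ideal Q "Laurent R" by (fact Q)
  have "laurent_monom R (h k) k \<in> Q" for k
    using coeff laurent_monom_eq_mult[of "h k" k] h Q.I_r_closed laurent_monom_closed[of \<one> k]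
    by (simp add: Laurent_simps laurent_carrier_coeff)
  then have "finsum (Laurent R) (\<lambda>k. laurent_monom R (h k) k) {k. h k \<noteq> \<zero>} \<in> Q"
    using h by (intro ideal_finsum_closed[OF Q]) (auto simp: laurent_carrier_iff)
  then show ?thesis
    using laurent_monom_expansion[OF h] by simp
qed

lemma laurent_const_mult_const:
  assumes a: "a \<in> carrier R" and b: "b \<in> carrier R" and h: "h \<in> laurent_carrier R"
  shows "laurent_monom R a 0 \<otimes>\<^bsub>Laurent R\<^esub> h \<otimes>\<^bsub>Laurent R\<^esub> laurent_monom R b 0 = (\<lambda>n. a \<otimes> h n \<otimes> b)"
proof -
  have ah: "laurent_monom R a 0 \<otimes>\<^bsub>Laurent R\<^esub> h = (\<lambda>n. a \<otimes> h n)"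
    using laurent_monom_mult_left[OF a laurent_carrier_coeff[OF h]] by simp
  then have "(\<lambda>n. a \<otimes> h n) \<in> laurent_carrier R"
    using Laurent_mult_closed[OF laurent_monom_closed[OF a, of 0] h] by simp
  then show ?thesis
    unfolding ah using laurent_monom_mult_right[OF b, of _ 0] by simp
qed

lemma Laurent_a_inv:
  assumes h: "h \<in> laurent_carrier R"
  shows "\<ominus>\<^bsub>Laurent R\<^esub> h = (\<lambda>n. \<ominus> h n)"
proof -
  interpret L: ring "Laurent R" by (rule ring_Laurent)
  have "{n. \<ominus> h n \<noteq> \<zero>} \<subseteq> {n. h n \<noteq> \<zero>}"
    using h laurent_carrier_coeff by auto
  then have "(\<lambda>n. \<ominus> h n) \<in> laurent_carrier R"
    using h unfolding laurent_carrier_iff by (auto intro: finite_subset)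
  then show ?thesis
    by (intro L.minus_equality) (use h laurent_carrier_coeff in \<open>auto simp: Laurent_simps l_neg\<close>)
qed

end

section \<open>The prime radical of the Laurent polynomial ring\<close>

context ring
begin

lemma ideal_Laurent_extension:
  assumes P: "ideal P R"
  shows "ideal {h \<in> laurent_carrier R. \<forall>n. h n \<in> P} (Laurent R)"
proof -
  interpret P: ideal P R by (fact P)
  interpret L: ring "Laurent R" by (rule ring_Laurent)
  have mult_mem: "f \<otimes>\<^bsub>Laurent R\<^esub> g \<in> {h \<in> laurent_carrier R. \<forall>n. h n \<in> P}"
    if f: "f \<in> laurent_carrier R" and g: "g \<in> laurent_carrier R"
      and fg: "(\<forall>i. f i \<in> P) \<or> (\<forall>j. g j \<in> P)" for f g
  proof -
    have "(f \<otimes>\<^bsub>Laurent R\<^esub> g) n \<in> P" for n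
      unfolding Laurent_simps using f g fg
      by (intro ideal_finsum_closed[OF P]) (auto simp: laurent_carrier_iff P.I_l_closed P.I_r_closed)
    then show ?thesis
      using Laurent_mult_closed[OF f g] by blast
  qed
  show ?thesis
  proof (rule idealI)
    show "subgroup {h \<in> laurent_carrier R. \<forall>n. h n \<in> P} (add_monoid (Laurent R))"
    proof (rule L.add.subgroupI)
      show "\<ominus>\<^bsub>Laurent R\<^esub> h \<in> {h \<in> laurent_carrier R. \<forall>n. h n \<in> P}"
        if "h \<in> {h \<in> laurent_carrier R. \<forall>n. h n \<in> P}" for h
        using that L.a_inv_closed[of h] by (simp add: Laurent_a_inv Laurent_simps)
      show "h \<oplus>\<^bsub>Laurent R\<^esub> g \<in> {h \<in> laurent_carrier R. \<forall>n. h n \<in> P}"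
        if "h \<in> {h \<in> laurent_carrier R. \<forall>n. h n \<in> P}" "g \<in> {h \<in> laurent_carrier R. \<forall>n. h n \<in> P}" for h g
        using that L.a_closed[of h g] by (simp add: Laurent_simps)
    qed (use L.zero_closed in \<open>auto simp: Laurent_simps\<close>)
  qed (use ring_Laurent mult_mem in \<open>auto simp: Laurent_simps(1)\<close>)
qed

lemma Laurent_top_coeff_mult_mem:
  assumes P: "ideal P R" and f: "f \<in> laurent_carrier R" and g: "g \<in> laurent_carrier R"
    and f_above: "\<And>i. d < i \<Longrightarrow> f i \<in> P" and g_above: "\<And>j. e < j \<Longrightarrow> g j \<in> P"
    and fg: "(f \<otimes>\<^bsub>Laurent R\<^esub> g) (d + e) \<in> P"
  shows "f d \<otimes> g e \<in> P"
proof -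
  interpret P: ideal P R by (fact P)
  let ?S = "{i. f i \<noteq> \<zero>} - {d}"
  have fin: "finite ?S" and fv: "\<And>n. f n \<in> carrier R" and gv: "\<And>n. g n \<in> carrier R"
    using f g by (auto simp: laurent_carrier_iff)
  have rest: "(\<Oplus>i\<in>?S. f i \<otimes> g (d + e - i)) \<in> P"
  proof (rule ideal_finsum_closed[OF P fin])
    fix i
    assume "i \<in> ?S"
    then have "d < i \<or> e < d + e - i"
      by auto
    then show "f i \<otimes> g (d + e - i) \<in> P"
      using f_above g_above fv gv P.I_l_closed P.I_r_closed by blast
  qed
  have "(f \<otimes>\<^bsub>Laurent R\<^esub> g) (d + e) = (\<Oplus>i\<in>insert d ?S. f i \<otimes> g (d + e - i))"
    using fin by (intro Laurent_mult_apply) (auto simp: fv gv)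
  also have "\<dots> = f d \<otimes> g e \<oplus> (\<Oplus>i\<in>?S. f i \<otimes> g (d + e - i))"
    using fin by (subst finsum_insert) (auto simp: fv gv)
  finally have "f d \<otimes> g e = (f \<otimes>\<^bsub>Laurent R\<^esub> g) (d + e) \<ominus> (\<Oplus>i\<in>?S. f i \<otimes> g (d + e - i))"
    using rest P.a_subset fv gv by (simp add: a_minus_def a_assoc r_neg subsetD)
  then show ?thesis
    using fg rest by (simp add: a_minus_def)
qed

lemma laurent_top_coeff_not_mem:
  assumes f: "f \<in> laurent_carrier R" and zero: "\<zero> \<in> P" and not_mem: "\<exists>n. f n \<notin> P"
  obtains d where "f d \<notin> P" and "\<And>i. d < i \<Longrightarrow> f i \<in> P"
proof -
  let ?D = "{n. f n \<notin> P}"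
  have "?D \<subseteq> {n. f n \<noteq> \<zero>}"
    using zero by auto
  then have "finite ?D"
    using f laurent_carrier_finite_support finite_subset by blast
  moreover have "?D \<noteq> {}"
    using not_mem by blast
  ultimately have "Max ?D \<in> ?D"
    by (rule Max_in)
  moreover have "f i \<in> P" if "Max ?D < i" for i
    using that Max_ge[OF \<open>finite ?D\<close>, of i] by auto
  ultimately show ?thesis
    using that by blast
qed

lemma nc_prime_ideal_Laurent_coeffs:
  assumes P: "nc_prime_ideal P R" and f: "f \<in> laurent_carrier R" and g: "g \<in> laurent_carrier R"
    and fg: "\<And>r n. r \<in> carrier R \<Longrightarrow>
      (f \<otimes>\<^bsub>Laurent R\<^esub> laurent_monom R r 0 \<otimes>\<^bsub>Laurent R\<^esub> g) n \<in> P"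
  shows "(\<forall>n. f n \<in> P) \<or> (\<forall>n. g n \<in> P)"
proof (rule ccontr)
  have P_ideal: "ideal P R"
    and P_prime: "\<And>a b. a \<in> carrier R \<Longrightarrow> b \<in> carrier R \<Longrightarrow>
      (\<forall>r\<in>carrier R. a \<otimes> r \<otimes> b \<in> P) \<Longrightarrow> a \<in> P \<or> b \<in> P"
    using P unfolding nc_prime_ideal_def by blast+
  interpret P: ideal P R by (fact P_ideal)
  assume "\<not> ((\<forall>n. f n \<in> P) \<or> (\<forall>n. g n \<in> P))"
  moreover have "\<zero> \<in> P"
    by (fact additive_subgroup.zero_closed[OF P.is_additive_subgroup])
  ultimately obtain d e where "f d \<notin> P" "g e \<notin> P"
    and f_above: "\<And>i. d < i \<Longrightarrow> f i \<in> P" and g_above: "\<And>j. e < j \<Longrightarrow> g j \<in> P"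
    using laurent_top_coeff_not_mem[OF f] laurent_top_coeff_not_mem[OF g] by metis
  have "f d \<otimes> r \<otimes> g e \<in> P" if r: "r \<in> carrier R" for r
  proof (rule Laurent_top_coeff_mult_mem[OF P_ideal _ g])
    have fr: "f \<otimes>\<^bsub>Laurent R\<^esub> laurent_monom R r 0 = (\<lambda>n. f n \<otimes> r)"
      using laurent_monom_mult_right[OF r f] by simp
    then show "(\<lambda>n. f n \<otimes> r) \<in> laurent_carrier R"
      using Laurent_mult_closed[OF f laurent_monom_closed[OF r, of 0]] by simp
    show "((\<lambda>n. f n \<otimes> r) \<otimes>\<^bsub>Laurent R\<^esub> g) (d + e) \<in> P"
      using fg[OF r, of "d + e"] unfolding fr .
    show "f i \<otimes> r \<in> P" if "d < i" for i
      using f_above[OF that] r by (simp add: P.I_r_closed)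
  qed (fact g_above)
  then have "f d \<in> P \<or> g e \<in> P"
    using P_prime[OF laurent_carrier_coeff[OF f] laurent_carrier_coeff[OF g]] by blast
  then show False
    using \<open>f d \<notin> P\<close> \<open>g e \<notin> P\<close> by blast
qed

lemma nc_prime_ideal_Laurent_extension:
  assumes P: "nc_prime_ideal P R"
  shows "nc_prime_ideal {h \<in> laurent_carrier R. \<forall>n. h n \<in> P} (Laurent R)"
    (is "nc_prime_ideal ?P _")
proof (unfold nc_prime_ideal_def, intro conjI ballI impI)
  have P_ideal: "ideal P R" and P_proper: "P \<noteq> carrier R"
    using P unfolding nc_prime_ideal_def by blast+
  interpret P: ideal P R by (fact P_ideal)
  interpret L: ring "Laurent R" by (fact ring_Laurent)
  show "ideal ?P (Laurent R)"
    by (fact ideal_Laurent_extension[OF P_ideal])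
  have "\<one>\<^bsub>Laurent R\<^esub> \<notin> ?P"
  proof
    assume "\<one>\<^bsub>Laurent R\<^esub> \<in> ?P"
    then have "\<one>\<^bsub>Laurent R\<^esub> 0 \<in> P"
      by blast
    then have "\<one> \<in> P"
      by (simp add: Laurent_simps)
    then show False
      using P.one_imp_carrier P_proper by blast
  qed
  then show "?P \<noteq> carrier (Laurent R)"
    using L.one_closed by blast
next
  fix f g
  assume f: "f \<in> carrier (Laurent R)" and g: "g \<in> carrier (Laurent R)"
    and fg: "\<forall>h\<in>carrier (Laurent R). f \<otimes>\<^bsub>Laurent R\<^esub> h \<otimes>\<^bsub>Laurent R\<^esub> g \<in> ?P"
  have "(f \<otimes>\<^bsub>Laurent R\<^esub> laurent_monom R r 0 \<otimes>\<^bsub>Laurent R\<^esub> g) n \<in> P" if "r \<in> carrier R" for r n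
    using fg laurent_monom_closed[OF that] by (auto simp: Laurent_simps)
  then have "(\<forall>n. f n \<in> P) \<or> (\<forall>n. g n \<in> P)"
    using nc_prime_ideal_Laurent_coeffs[OF P] f g by (simp add: Laurent_simps)
  then show "f \<in> ?P \<or> g \<in> ?P"
    using f g by (simp add: Laurent_simps)
qed

lemma nc_prime_ideal_Laurent_contraction:
  assumes Q: "nc_prime_ideal Q (Laurent R)"
  shows "nc_prime_ideal {r \<in> carrier R. laurent_monom R r 0 \<in> Q} R"
    (is "nc_prime_ideal ?I _")
proof -
  have Q_ideal: "ideal Q (Laurent R)" and Q_proper: "Q \<noteq> carrier (Laurent R)"
    and Q_prime: "\<And>a b. a \<in> laurent_carrier R \<Longrightarrow> b \<in> laurent_carrier R \<Longrightarrow>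
      (\<forall>h\<in>laurent_carrier R. a \<otimes>\<^bsub>Laurent R\<^esub> h \<otimes>\<^bsub>Laurent R\<^esub> b \<in> Q) \<Longrightarrow> a \<in> Q \<or> b \<in> Q"
    using Q unfolding nc_prime_ideal_def Laurent_simps(1) by blast+
  interpret Q: ideal Q "Laurent R" by (fact Q_ideal)
  have "ideal ?I R"
    using ring_hom_ring.ideal_vimage[OF ring_hom_ring_laurent_const Q_ideal] by simp
  moreover have "?I \<noteq> carrier R"
  proof
    assume "?I = carrier R"
    then have "\<one>\<^bsub>Laurent R\<^esub> \<in> Q"
      unfolding Laurent_one by blast
    then show False
      using Q.one_imp_carrier Q_proper by blast
  qed
  moreover have "a \<in> ?I \<or> b \<in> ?I"
    if a: "a \<in> carrier R" and b: "b \<in> carrier R" and ab: "\<forall>r\<in>carrier R. a \<otimes> r \<otimes> b \<in> ?I" for a b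
  proof -
    have "laurent_monom R a 0 \<otimes>\<^bsub>Laurent R\<^esub> h \<otimes>\<^bsub>Laurent R\<^esub> laurent_monom R b 0 \<in> Q"
      if h: "h \<in> laurent_carrier R" for h
    proof -
      have "laurent_monom R a 0 \<otimes>\<^bsub>Laurent R\<^esub> h \<otimes>\<^bsub>Laurent R\<^esub> laurent_monom R b 0 \<in> laurent_carrier R"
        using Laurent_mult_closed laurent_monom_closed a b h by blast
      then show ?thesis
        unfolding laurent_const_mult_const[OF a b h]
        by (rule Laurent_mem_idealI[OF Q_ideal]) (use ab laurent_carrier_coeff[OF h] in blast)
    qed
    then have "laurent_monom R a 0 \<in> Q \<or> laurent_monom R b 0 \<in> Q"
      using Q_prime[OF laurent_monom_closed[OF a] laurent_monom_closed[OF b]] by blast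
    then show ?thesis
      using a b by simp
  qed
  ultimately show ?thesis
    unfolding nc_prime_ideal_def by (intro conjI ballI impI)
qed

lemma ideal_prime_radical: "ideal (prime_radical R) R"
proof (cases "{P. nc_prime_ideal P R} = {}")
  case True
  then show ?thesis
    unfolding prime_radical_def using oneideal by simp
next
  case False
  then obtain P where P: "nc_prime_ideal P R"
    by blast
  then have "\<Inter>{P. nc_prime_ideal P R} \<subseteq> P"
    by blast
  also have "P \<subseteq> carrier R"
    using P unfolding nc_prime_ideal_def by (meson ideal.axioms(1) additive_subgroup.a_subset)
  finally have "prime_radical R = \<Inter>{P. nc_prime_ideal P R}"
    unfolding prime_radical_def by (rule Int_absorb1)
  moreover have "ideal (\<Inter>{P. nc_prime_ideal P R}) R"
    using False by (intro i_Intersect) (simp add: nc_prime_ideal_def)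
  ultimately show ?thesis
    by simp
qed

lemma prime_radical_Laurent:
  "prime_radical (Laurent R) = {h \<in> laurent_carrier R. \<forall>n. h n \<in> prime_radical R}"
proof (intro equalityI subsetI)
  fix h
  assume h: "h \<in> prime_radical (Laurent R)"
  have "h n \<in> P" if "nc_prime_ideal P R" for P n
    using h nc_prime_ideal_Laurent_extension[OF that] by (auto simp: prime_radical_def)
  then show "h \<in> {h \<in> laurent_carrier R. \<forall>n. h n \<in> prime_radical R}"
    using h laurent_carrier_coeff by (auto simp: prime_radical_def Laurent_simps)
next
  fix h
  assume h: "h \<in> {h \<in> laurent_carrier R. \<forall>n. h n \<in> prime_radical R}"
  have "h \<in> Q" if Q: "nc_prime_ideal Q (Laurent R)" for Q
  proof (rule Laurent_mem_idealI)
    show "ideal Q (Laurent R)"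
      using Q by (simp add: nc_prime_ideal_def)
    show "laurent_monom R (h n) 0 \<in> Q" for n
      using h nc_prime_ideal_Laurent_contraction[OF Q] by (auto simp: prime_radical_def)
  qed (use h in simp)
  then show "h \<in> prime_radical (Laurent R)"
    using h by (simp add: prime_radical_def Laurent_simps)
qed

end

section \<open>Kronecker substitution\<close>

text \<open>
  For \<open>F \<in> R[x,x\<inverse>][y]\<close>, \<open>kronecker k N F\<close> is \<open>x\<^sup>N F(x, x\<^sup>k)\<close> read as a polynomial in \<open>x\<close>:
  its coefficient of \<open>x\<^bsup>k i + w\<^esup>\<close> (\<open>w < k\<close>) is that of \<open>x\<^bsup>w - N\<^esup> y\<^sup>i\<close> in \<open>F\<close>.
\<close>
definition kronecker :: "nat \<Rightarrow> nat \<Rightarrow> (nat \<Rightarrow> int \<Rightarrow> 'a) \<Rightarrow> nat \<Rightarrow> 'a" where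
  "kronecker k N F t = F (t div k) (int (t mod k) - int N)"

lemma kronecker_apply: "w < k \<Longrightarrow> kronecker k N F (k * i + w) = F i (int w - int N)"
  by (simp add: kronecker_def)

context ring
begin

lemma UP_Laurent_coeff: "F \<in> carrier (UP (Laurent R)) \<Longrightarrow> F i \<in> laurent_carrier R"
  by (auto simp: UP_def up_def Laurent_simps)

lemma UP_Laurent_exponent_bound:
  assumes F: "F \<in> carrier (UP (Laurent R))"
  shows "\<exists>N. \<forall>i a. F i a \<noteq> \<zero> \<longrightarrow> \<bar>a\<bar> < int N"
proof -
  obtain d where d: "bound \<zero>\<^bsub>Laurent R\<^esub> d F"
    using F by (auto simp: UP_def up_def)
  let ?Y = "\<Union>i\<le>d. {a. F i a \<noteq> \<zero>}"
  have "finite ?Y"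
    using UP_Laurent_coeff[OF F] laurent_carrier_finite_support by blast
  then obtain N where N: "\<And>a. a \<in> ?Y \<Longrightarrow> nat \<bar>a\<bar> < N"
    using finite_nat_set_iff_bounded[of "(\<lambda>a. nat \<bar>a\<bar>) ` ?Y"] by auto
  have "F i a \<noteq> \<zero> \<Longrightarrow> \<bar>a\<bar> < int N" for i a
  proof -
    assume Fia: "F i a \<noteq> \<zero>"
    have "i \<le> d"
    proof (rule ccontr)
      assume "\<not> i \<le> d"
      then have "F i = \<zero>\<^bsub>Laurent R\<^esub>"
        using d by (simp add: bound_def)
      then show False
        using Fia by (simp add: Laurent_simps)
    qed
    then have "nat \<bar>a\<bar> < N"
      using N Fia by blast
    then show ?thesis
      by (simp add: nat_less_iff)
  qed
  then show ?thesis
    by blast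
qed

lemma kronecker_closed:
  assumes F: "F \<in> carrier (UP (Laurent R))" and k: "0 < k"
  shows "kronecker k N F \<in> carrier (UP R)"
proof -
  obtain d where d: "bound \<zero>\<^bsub>Laurent R\<^esub> d F"
    using F by (auto simp: UP_def up_def)
  have "bound \<zero> (k * (d + 1)) (kronecker k N F)"
  proof
    fix t
    assume "k * (d + 1) < t"
    then have "d < t div k"
      using k less_eq_div_iff_mult_less_eq[of k "d + 1" t] by (simp add: mult.commute)
    then have "F (t div k) = \<zero>\<^bsub>Laurent R\<^esub>"
      using d by (simp add: bound_def)
    then show "kronecker k N F t = \<zero>"
      by (simp add: kronecker_def Laurent_simps)
  qed
  then show ?thesis
    using UP_Laurent_coeff[OF F] by (auto simp: UP_def up_def kronecker_def laurent_carrier_coeff)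
qed

context
  fixes N k :: nat and F G :: "nat \<Rightarrow> int \<Rightarrow> 'a"
  assumes F: "F \<in> carrier (UP (Laurent R))" and G: "G \<in> carrier (UP (Laurent R))"
    and F_bound: "\<And>i a. F i a \<noteq> \<zero> \<Longrightarrow> \<bar>a\<bar> < int N"
    and G_bound: "\<And>i a. G i a \<noteq> \<zero> \<Longrightarrow> \<bar>a\<bar> < int N"
    and k: "4 * N \<le> k" "0 < k"
begin

lemma kronecker_mult_term:
  assumes i: "i \<le> m" and w: "w < k" and r: "r < k"
  shows "(if k * i + w \<le> k * m + r
          then kronecker k N F (k * i + w) \<otimes> kronecker k N G (k * m + r - (k * i + w)) else \<zero>)
       = F i (int w - int N) \<otimes> G (m - i) (int r - int w - int N)"
proof -
  have Fv: "F i a \<in> carrier R" and Gv: "G i a \<in> carrier R" for i a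
    using UP_Laurent_coeff[OF F] UP_Laurent_coeff[OF G] laurent_carrier_coeff by auto
  \<comment> \<open>Nonzero coefficients sit at offsets \<open>w < 2N\<close> of a block, so \<open>k \<ge> 4N\<close> rules out carries.\<close>
  consider "F i (int w - int N) = \<zero>" | "w \<le> r" | "r < w" "int w < 2 * int N"
    using F_bound[of i "int w - int N"] by fastforce
  then show ?thesis
  proof cases
    case 1
    then show ?thesis
      using w by (simp add: kronecker_apply kronecker_def Gv)
  next
    case 2
    then have "k * m + r - (k * i + w) = k * (m - i) + (r - w)"
      using i by (simp add: diff_mult_distrib2 algebra_simps)
    then have "kronecker k N G (k * m + r - (k * i + w)) = G (m - i) (int (r - w) - int N)"
      using r by (simp only: kronecker_apply less_imp_diff_less)
    then show ?thesis
      using i w 2 by (simp add: kronecker_apply add_le_mono of_nat_diff)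
  next
    case 3
    have G_zero: "G (m - i) (int r - int w - int N) = \<zero>"
      using G_bound 3 by fastforce
    show ?thesis
    proof (cases "i < m")
      case True
      then obtain d where m: "m = i + 1 + d"
        using less_imp_Suc_add by fastforce
      then have "k * m + r - (k * i + w) = k * (m - i - 1) + (k + r - w)"
        using 3 w by (simp add: algebra_simps)
      moreover have "k + r - w < k" and "int N \<le> int (k + r - w) - int N"
        using 3 w k by auto
      ultimately have "kronecker k N G (k * m + r - (k * i + w)) = \<zero>"
        using G_bound by (fastforce simp: kronecker_apply)
      then show ?thesis
        using G_zero by (simp add: Fv kronecker_def)
    next
      case False
      then show ?thesis
        using i 3 G_zero by (simp add: Fv)
    qed
  qed
qed

lemma Laurent_mult_apply_window:
  "(F i \<otimes>\<^bsub>Laurent R\<^esub> G j) (int r - 2 * int N)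
    = (\<Oplus>w\<in>{..<k}. F i (int w - int N) \<otimes> G j (int r - int w - int N))"
proof -
  have Fv: "F i a \<in> carrier R" and Gv: "G j a \<in> carrier R" for a
    using UP_Laurent_coeff[OF F] UP_Laurent_coeff[OF G] laurent_carrier_coeff by auto
  let ?A = "(\<lambda>w. int w - int N) ` {..<k}"
  have "{a. F i a \<noteq> \<zero>} \<subseteq> ?A"
  proof
    fix a
    assume "a \<in> {a. F i a \<noteq> \<zero>}"
    then have "\<bar>a\<bar> < int N"
      using F_bound by blast
    then show "a \<in> ?A"
      using k by (intro image_eqI[of _ _ "nat (a + int N)"]) auto
  qed
  then have "(F i \<otimes>\<^bsub>Laurent R\<^esub> G j) (int r - 2 * int N)
      = (\<Oplus>a\<in>?A. F i a \<otimes> G j (int r - 2 * int N - a))"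
    by (intro Laurent_mult_apply) (auto simp: Fv Gv)
  also have "\<dots> = (\<Oplus>w\<in>{..<k}. F i (int w - int N) \<otimes> G j (int r - int w - int N))"
    by (subst finsum_reindex) (auto simp: inj_on_def Fv Gv algebra_simps)
  finally show ?thesis .
qed

lemma kronecker_mult_apply:
  assumes r: "r < k"
  shows "(kronecker k N F \<otimes>\<^bsub>UP R\<^esub> kronecker k N G) (k * m + r)
       = (\<Oplus>i\<in>{..m}. (F i \<otimes>\<^bsub>Laurent R\<^esub> G (m - i)) (int r - 2 * int N))"
proof -
  let ?p = "kronecker k N F" and ?q = "kronecker k N G"
  define \<phi> where "\<phi> u = (if u \<le> k * m + r then ?p u \<otimes> ?q (k * m + r - u) else \<zero>)" for u
  have Fv: "F i a \<in> carrier R" and Gv: "G i a \<in> carrier R" for i a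
    using UP_Laurent_coeff[OF F] UP_Laurent_coeff[OF G] laurent_carrier_coeff by auto
  then have \<phi>v: "\<phi> u \<in> carrier R" for u
    by (simp add: \<phi>_def kronecker_def)
  have "(?p \<otimes>\<^bsub>UP R\<^esub> ?q) (k * m + r) = (\<Oplus>u\<in>{..k * m + r}. \<phi> u)"
    unfolding UP_mult_apply[OF kronecker_closed[OF F k(2)] kronecker_closed[OF G k(2)]]
    by (intro finsum_cong) (auto simp: \<phi>_def kronecker_def Fv Gv)
  also have "\<dots> = (\<Oplus>u\<in>{..<k * Suc m}. \<phi> u)"
    using r \<phi>v by (intro add.finprod_mono_neutral_cong) (auto simp: \<phi>_def)
  also have "\<dots> = (\<Oplus>i\<in>{..<Suc m}. \<Oplus>w\<in>{..<k}. \<phi> (k * i + w))"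
    by (rule add.finprod_lessThan_mult[OF \<phi>v])
  also have "\<dots> = (\<Oplus>i\<in>{..m}. (F i \<otimes>\<^bsub>Laurent R\<^esub> G (m - i)) (int r - 2 * int N))"
  proof (rule finsum_cong')
    fix i
    assume "i \<in> {..m}"
    then have i: "i \<le> m"
      by simp
    have "(F i \<otimes>\<^bsub>Laurent R\<^esub> G (m - i)) (int r - 2 * int N)
        = (\<Oplus>w\<in>{..<k}. F i (int w - int N) \<otimes> G (m - i) (int r - int w - int N))"
      by (rule Laurent_mult_apply_window)
    also have "\<dots> = (\<Oplus>w\<in>{..<k}. \<phi> (k * i + w))"
      using kronecker_mult_term[OF i _ r] by (intro finsum_cong) (auto simp: \<phi>_def Fv Gv)
    finally show "(\<Oplus>w\<in>{..<k}. \<phi> (k * i + w)) = (F i \<otimes>\<^bsub>Laurent R\<^esub> G (m - i)) (int r - 2 * int N)"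
      by simp
  qed (use UP_Laurent_coeff[OF F] UP_Laurent_coeff[OF G] Laurent_mult_closed laurent_carrier_coeff in auto)
  finally show ?thesis .
qed

lemma kronecker_mult_eq_zero:
  assumes FG: "F \<otimes>\<^bsub>UP (Laurent R)\<^esub> G = \<zero>\<^bsub>UP (Laurent R)\<^esub>"
  shows "kronecker k N F \<otimes>\<^bsub>UP R\<^esub> kronecker k N G = \<zero>\<^bsub>UP R\<^esub>"
proof
  fix t
  have "(kronecker k N F \<otimes>\<^bsub>UP R\<^esub> kronecker k N G) (k * (t div k) + t mod k)
      = (\<Oplus>i\<in>{..t div k}. (F i \<otimes>\<^bsub>Laurent R\<^esub> G (t div k - i)) (int (t mod k) - 2 * int N))"
    using k by (intro kronecker_mult_apply) simp
  then have "(kronecker k N F \<otimes>\<^bsub>UP R\<^esub> kronecker k N G) t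
      = (\<Oplus>i\<in>{..t div k}. (F i \<otimes>\<^bsub>Laurent R\<^esub> G (t div k - i)) (int (t mod k) - 2 * int N))"
    by simp
  also have "\<dots> = ((F \<otimes>\<^bsub>UP (Laurent R)\<^esub> G) (t div k)) (int (t mod k) - 2 * int N)"
    using UP_Laurent_coeff[OF F] UP_Laurent_coeff[OF G] Laurent_mult_closed
    by (simp add: UP_mult_apply[OF F G] Laurent_finsum_apply Pi_def)
  also have "\<dots> = \<zero>"
    by (simp add: FG UP_zero_apply Laurent_simps)
  finally show "(kronecker k N F \<otimes>\<^bsub>UP R\<^esub> kronecker k N G) t = \<zero>\<^bsub>UP R\<^esub> t"
    by (simp add: UP_zero_apply)
qed

end

end

section \<open>Almost Armendariz rings\<close>

context ring
begin

lemma almost_armendariz_of_Laurent: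
  assumes "almost_armendariz (Laurent R)"
  shows "almost_armendariz R"
  unfolding almost_armendariz_def
proof (intro ballI impI allI)
  fix f g i j
  assume f: "f \<in> carrier (UP R)" and g: "g \<in> carrier (UP R)"
    and fg: "f \<otimes>\<^bsub>UP R\<^esub> g = \<zero>\<^bsub>UP R\<^esub>"
  let ?c = "\<lambda>r. laurent_monom R r 0"
  interpret c: ring_hom_ring R "Laurent R" ?c
    by (fact ring_hom_ring_laurent_const)
  have "(?c \<circ> f) \<otimes>\<^bsub>UP (Laurent R)\<^esub> (?c \<circ> g) = ?c \<circ> \<zero>\<^bsub>UP R\<^esub>"
    by (simp add: c.UP_map_mult f g fg)
  also have "\<dots> = \<zero>\<^bsub>UP (Laurent R)\<^esub>"
    by (rule ext) (simp add: UP_zero_apply)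
  finally have "(?c \<circ> f) i \<otimes>\<^bsub>Laurent R\<^esub> (?c \<circ> g) j \<in> prime_radical (Laurent R)"
    using assms c.UP_map_closed f g unfolding almost_armendariz_def by blast
  moreover have "f i \<in> carrier R" "g j \<in> carrier R"
    using f g by (auto simp: UP_def up_def)
  ultimately have "?c (f i \<otimes> g j) 0 \<in> prime_radical R"
    by (simp add: prime_radical_Laurent)
  then show "f i \<otimes> g j \<in> prime_radical R"
    by (simp add: laurent_monom_def)
qed

lemma almost_armendariz_UP_Laurent_coeff_mult:
  assumes "almost_armendariz R"
    and F: "F \<in> carrier (UP (Laurent R))" and G: "G \<in> carrier (UP (Laurent R))"
    and FG: "F \<otimes>\<^bsub>UP (Laurent R)\<^esub> G = \<zero>\<^bsub>UP (Laurent R)\<^esub>"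
  shows "F i a \<otimes> G j b \<in> prime_radical R"
proof -
  obtain NF NG where NF: "\<And>i a. F i a \<noteq> \<zero> \<Longrightarrow> \<bar>a\<bar> < int NF"
    and NG: "\<And>i a. G i a \<noteq> \<zero> \<Longrightarrow> \<bar>a\<bar> < int NG"
    using UP_Laurent_exponent_bound[OF F] UP_Laurent_exponent_bound[OF G] by blast
  define N where "N = max NF NG"
  define k where "k = 4 * N + 1"
  have F_bound: "\<And>i a. F i a \<noteq> \<zero> \<Longrightarrow> \<bar>a\<bar> < int N" and G_bound: "\<And>i a. G i a \<noteq> \<zero> \<Longrightarrow> \<bar>a\<bar> < int N"
    using NF NG by (fastforce simp: N_def)+
  have k: "4 * N \<le> k" "0 < k"
    by (simp_all add: k_def)
  have "kronecker k N F \<otimes>\<^bsub>UP R\<^esub> kronecker k N G = \<zero>\<^bsub>UP R\<^esub>"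
    by (rule kronecker_mult_eq_zero) (fact F G F_bound G_bound k FG)+
  then have products: "kronecker k N F u \<otimes> kronecker k N G v \<in> prime_radical R" for u v
    using assms kronecker_closed[OF F k(2)] kronecker_closed[OF G k(2)]
    unfolding almost_armendariz_def by blast
  have kronecker_exponent: "kronecker k N H (k * i + nat (a + int N)) = H i a"
    if "\<bar>a\<bar> < int N" for H :: "nat \<Rightarrow> int \<Rightarrow> 'a" and i a
    using that k by (subst kronecker_apply) auto
  show ?thesis
  proof (cases "F i a = \<zero> \<or> G j b = \<zero>")
    case True
    have "F i a \<in> carrier R" "G j b \<in> carrier R"
      using UP_Laurent_coeff[OF F] UP_Laurent_coeff[OF G] laurent_carrier_coeff by blast+
    then show ?thesis
      using True additive_subgroup.zero_closed[OF ideal.axioms(1)[OF ideal_prime_radical]] by auto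
  next
    case False
    then have "\<bar>a\<bar> < int N" "\<bar>b\<bar> < int N"
      using F_bound G_bound by blast+
    then show ?thesis
      using kronecker_exponent[of a F i] kronecker_exponent[of b G j] products by metis
  qed
qed

lemma almost_armendariz_Laurent:
  assumes "almost_armendariz R"
  shows "almost_armendariz (Laurent R)"
  unfolding almost_armendariz_def
proof (intro ballI impI allI)
  fix F G i j
  assume F: "F \<in> carrier (UP (Laurent R))" and G: "G \<in> carrier (UP (Laurent R))"
    and FG: "F \<otimes>\<^bsub>UP (Laurent R)\<^esub> G = \<zero>\<^bsub>UP (Laurent R)\<^esub>"
  show "F i \<otimes>\<^bsub>Laurent R\<^esub> G j \<in> prime_radical (Laurent R)"
    unfolding prime_radical_Laurent
  proof (intro CollectI conjI allI)
    show "F i \<otimes>\<^bsub>Laurent R\<^esub> G j \<in> laurent_carrier R"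
      using Laurent_mult_closed UP_Laurent_coeff F G by blast
    show "(F i \<otimes>\<^bsub>Laurent R\<^esub> G j) n \<in> prime_radical R" for n
      unfolding Laurent_simps
      using almost_armendariz_UP_Laurent_coeff_mult[OF assms F G FG]
        UP_Laurent_coeff[OF F] laurent_carrier_finite_support
      by (intro ideal_finsum_closed[OF ideal_prime_radical]) auto
  qed
qed

end

theorem theorem2p4:
  fixes R :: "('a, 'm) ring_scheme"
  assumes "ring R"
  shows "almost_armendariz R \<longleftrightarrow> almost_armendariz (Laurent R)"
  using ring.almost_armendariz_Laurent[OF assms] ring.almost_armendariz_of_Laurent[OF assms] by blast

end
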